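(* Let $f:S^2\to\mathbb{R}^3$ be a strictly convex embedding of the $2$-sphere, and let $\tilde\xi:S^2\to\mathbb{R}^3$ be its Blaschke normal map. Then $\tilde\xi$ is a wave front: there is a map $\nu:S^2\to(\mathbb{R}^3)^*$ such that $p\mapsto(\tilde\xi_p,[\nu_p])$ is a Legendrian immersion of $S^2$ into the projective cotangent bundle $P(T^*\mathbb{R}^3)=\mathbb{R}^3\times P((\mathbb{R}^3)^* )$ (with its canonical contact structure), whose projection to $\mathbb{R}^3$ is $\tilde\xi$.
   Context: For a strictly convex embedding $f$, affine differential geometry provides a transversal vector field $\xi$ along $f$ (the affine normal), a torsion free connection $\nabla$ on $S^2$, a bundle homomorphism $\alpha:TS^2\to TS^2$ (affine shape operator) and a positive definite symmetric tensor $h$ such that $D_X df(Y)=df(\nabla_XY)+h(X,Y)\xi$ and $D_X\xi=-df(\alpha(X))$ for all vector fields $X,Y$, where $D$ is the standard flat connection of $\mathbb{R}^3$; this structure is unique up to multiplication of $\xi$ by a nonzero constant. The Blaschke normal map is the map $\tilde\xi:S^2\to\mathbb{R}^3$ induced by $\xi$ (identifying vectors of $\mathbb{R}^3$ with points). *)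

theory Defs
  imports "HOL-Analysis.Analysis"
begin

definition S2 :: "(real^3) set" where
  "S2 = sphere 0 1"

definition TS2 :: "real^3 \<Rightarrow> (real^3) set" where
  "TS2 p = {v. v \<bullet> p = 0}"

text \<open>Degree-0 homogeneous extension of a map defined on S2 to R^3 minus 0.\<close>
definition hext :: "(real^3 \<Rightarrow> 'b) \<Rightarrow> real^3 \<Rightarrow> 'b" where
  "hext f x = f (scaleR (1 / norm x) x)"

fun Ck_on :: "nat \<Rightarrow> 'a::real_normed_vector set \<Rightarrow> ('a \<Rightarrow> 'b::real_normed_vector) \<Rightarrow> bool" where
  "Ck_on 0 U f = continuous_on U f"
| "Ck_on (Suc k) U f =
     ((\<forall>x\<in>U. f differentiable (at x)) \<and>
      (\<forall>v. Ck_on k U (\<lambda>x. frechet_derivative f (at x) v)))"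

definition Cinf_on :: "'a::real_normed_vector set \<Rightarrow> ('a \<Rightarrow> 'b::real_normed_vector) \<Rightarrow> bool" where
  "Cinf_on U f = (\<forall>k. Ck_on k U f)"

definition smooth_S2 :: "(real^3 \<Rightarrow> 'b::real_normed_vector) \<Rightarrow> bool" where
  "smooth_S2 f = Cinf_on (- {0}) (hext f)"

definition dS2 :: "(real^3 \<Rightarrow> 'b::real_normed_vector) \<Rightarrow> real^3 \<Rightarrow> real^3 \<Rightarrow> 'b" where
  "dS2 f p v = frechet_derivative (hext f) (at p) v"

text \<open>Second derivative of the homogeneous extension (= second derivative along great circles).\<close>
definition d2S2 :: "(real^3 \<Rightarrow> 'b::real_normed_vector) \<Rightarrow> real^3 \<Rightarrow> real^3 \<Rightarrow> real^3 \<Rightarrow> 'b" where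
  "d2S2 f p u v = frechet_derivative (\<lambda>q. frechet_derivative (hext f) (at q) u) (at p) v"

definition vfield :: "(real^3 \<Rightarrow> real^3) \<Rightarrow> bool" where
  "vfield X = (smooth_S2 X \<and> (\<forall>p\<in>S2. X p \<in> TS2 p))"

definition bracket :: "(real^3 \<Rightarrow> real^3) \<Rightarrow> (real^3 \<Rightarrow> real^3) \<Rightarrow> real^3 \<Rightarrow> real^3" where
  "bracket X Y p = dS2 Y p (X p) - dS2 X p (Y p)"

definition immersion_S2 :: "(real^3 \<Rightarrow> real^3) \<Rightarrow> bool" where
  "immersion_S2 f = (\<forall>p\<in>S2. \<forall>v\<in>TS2 p. dS2 f p v = 0 \<longrightarrow> v = 0)"

text \<open>Strictly convex: smooth embedding whose second fundamental form is definite everywhere.\<close>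
definition strictly_convex_embedding :: "(real^3 \<Rightarrow> real^3) \<Rightarrow> bool" where
  "strictly_convex_embedding f =
     (smooth_S2 f \<and> inj_on f S2 \<and> immersion_S2 f \<and>
      (\<forall>p\<in>S2. \<exists>l::real^3. (\<forall>v\<in>TS2 p. l \<bullet> dS2 f p v = 0) \<and>
              (\<forall>v\<in>TS2 p. v \<noteq> 0 \<longrightarrow> l \<bullet> d2S2 f p v v > 0)))"

definition torsion_free_connection ::
  "((real^3 \<Rightarrow> real^3) \<Rightarrow> (real^3 \<Rightarrow> real^3) \<Rightarrow> real^3 \<Rightarrow> real^3) \<Rightarrow> bool" where
  "torsion_free_connection nabla =
     (\<forall>X Y Z. vfield X \<longrightarrow> vfield Y \<longrightarrow> vfield Z \<longrightarrow>
        vfield (nabla X Y) \<and>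
        (\<forall>p\<in>S2. nabla (\<lambda>q. X q + Z q) Y p = nabla X Y p + nabla Z Y p) \<and>
        (\<forall>p\<in>S2. nabla X (\<lambda>q. Y q + Z q) p = nabla X Y p + nabla X Z p) \<and>
        (\<forall>phi :: real^3 \<Rightarrow> real. smooth_S2 phi \<longrightarrow>
           (\<forall>p\<in>S2. nabla (\<lambda>q. phi q *\<^sub>R X q) Y p = phi p *\<^sub>R nabla X Y p) \<and>
           (\<forall>p\<in>S2. nabla X (\<lambda>q. phi q *\<^sub>R Y q) p =
                      dS2 phi p (X p) *\<^sub>R Y p + phi p *\<^sub>R nabla X Y p)) \<and>
        (\<forall>p\<in>S2. nabla X Y p - nabla Y X p = bracket X Y p))"

definition bundle_endo :: "(real^3 \<Rightarrow> real^3 \<Rightarrow> real^3) \<Rightarrow> bool" where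
  "bundle_endo alpha =
     ((\<forall>p\<in>S2. linear (alpha p) \<and> alpha p ` TS2 p \<subseteq> TS2 p) \<and>
      (\<forall>X. vfield X \<longrightarrow> vfield (\<lambda>p. alpha p (X p))))"

definition pos_def_sym_tensor :: "(real^3 \<Rightarrow> real^3 \<Rightarrow> real^3 \<Rightarrow> real) \<Rightarrow> bool" where
  "pos_def_sym_tensor h =
     ((\<forall>p\<in>S2. bilinear (h p) \<and>
         (\<forall>u\<in>TS2 p. \<forall>v\<in>TS2 p. h p u v = h p v u) \<and>
         (\<forall>u\<in>TS2 p. u \<noteq> 0 \<longrightarrow> h p u u > 0)) \<and>
      (\<forall>X Y. vfield X \<longrightarrow> vfield Y \<longrightarrow> smooth_S2 (\<lambda>p. h p (X p) (Y p))))"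

definition det3 :: "real^3 \<Rightarrow> real^3 \<Rightarrow> real^3 \<Rightarrow> real" where
  "det3 a b c = det (vector [a, b, c] :: real^3^3)"

text \<open>xi is an affine (Blaschke) normal field of f: a transversal field with
  the structure equations of affine differential geometry, and the Blaschke
  normalisation (induced volume = constant multiple of the volume of h).\<close>
definition blaschke_normal :: "(real^3 \<Rightarrow> real^3) \<Rightarrow> (real^3 \<Rightarrow> real^3) \<Rightarrow> bool" where
  "blaschke_normal f xi =
     (smooth_S2 xi \<and>
      (\<forall>p\<in>S2. xi p \<notin> dS2 f p ` TS2 p) \<and>
      (\<exists>nabla alpha h.
         torsion_free_connection nabla \<and> bundle_endo alpha \<and> pos_def_sym_tensor h \<and>
         (\<forall>X Y. vfield X \<longrightarrow> vfield Y \<longrightarrow> (\<forall>p\<in>S2.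
             dS2 (\<lambda>q. dS2 f q (Y q)) p (X p) =
               dS2 f p (nabla X Y p) + h p (X p) (Y p) *\<^sub>R xi p)) \<and>
         (\<forall>X. vfield X \<longrightarrow> (\<forall>p\<in>S2. dS2 xi p (X p) = - dS2 f p (alpha p (X p)))) \<and>
         (\<exists>k>0. \<forall>p\<in>S2. \<forall>u\<in>TS2 p. \<forall>v\<in>TS2 p.
             (det3 (dS2 f p u) (dS2 f p v) (xi p))\<^sup>2 =
               k * (h p u u * h p v v - (h p u v)\<^sup>2))))"

text \<open>x is a wave front in R^3: there is a smooth nowhere vanishing covector field nu
  (covectors identified with vectors via the inner product) such that
  p \<mapsto> (x p, [nu p]) into R^3 \<times> P((R^3)^*) is a Legendrian immersion:
  it is isotropic for the canonical contact structure (nu(dx) = 0), and its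
  differential is injective (dx v = 0 and d nu v \<in> span (nu p) imply v = 0).\<close>
definition wave_front :: "(real^3 \<Rightarrow> real^3) \<Rightarrow> bool" where
  "wave_front x =
     (\<exists>nu :: real^3 \<Rightarrow> real^3.
        smooth_S2 nu \<and> (\<forall>p\<in>S2. nu p \<noteq> 0) \<and>
        (\<forall>p\<in>S2. \<forall>v\<in>TS2 p. nu p \<bullet> dS2 x p v = 0) \<and>
        (\<forall>p\<in>S2. \<forall>v\<in>TS2 p.
            dS2 x p v = 0 \<and> (\<exists>c. dS2 nu p v = c *\<^sub>R nu p) \<longrightarrow> v = 0))"

end

(*
  The conormal \<nu> = df u \<times> df w, for (u, w) a positive orthonormal frame of T_p S\<^sup>2,
  annihilates df(T_p S\<^sup>2); by the Weingarten equation d\<xi> = - df \<circ> \<alpha> it annihilates d\<xi>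
  as well, so (\<xi>, [\<nu>]) is isotropic.  The volume condition of the Blaschke structure
  identifies (\<nu> \<bullet> \<xi>)\<^sup>2 = det(df u, df w, \<xi>)\<^sup>2 with a positive multiple of
  h(u,u) h(w,w) - h(u,w)\<^sup>2 > 0, so \<nu> \<bullet> \<xi> \<noteq> 0.  Differentiating \<nu> \<bullet> df(V) = 0 along
  v = V p and using the Gauss equation gives h(v,v) (\<nu> \<bullet> \<xi>) + d\<nu> v \<bullet> df v = 0, so
  d\<nu> v \<in> \<real>\<nu> forces h(v,v) = 0, i.e. v = 0: the lift is an immersion even where d\<xi>
  degenerates.
*)

theory Submission
  imports Defs "HOL-Analysis.Cross3"
begin

unbundle cross3_syntax

section \<open>C^k maps on open sets\<close>

lemma Ck_on_Suc_has_derivative: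
  "Ck_on (Suc k) U f \<Longrightarrow> x \<in> U \<Longrightarrow> (f has_derivative frechet_derivative f (at x)) (at x)"
  using frechet_derivative_works by auto

lemma Ck_on_Suc_imp_Ck_on: "Ck_on (Suc k) U f \<Longrightarrow> Ck_on k U f"
proof (induction k arbitrary: f)
  case 0
  then show ?case
    by (auto intro!: continuous_at_imp_continuous_on differentiable_imp_continuous_within)
qed auto

lemma Ck_on_cong:
  assumes "open U" "\<And>x. x \<in> U \<Longrightarrow> f x = g x" "Ck_on k U f"
  shows "Ck_on k U g"
  using assms
proof (induction k arbitrary: f g)
  case 0
  then show ?case using continuous_on_cong by force
next
  case (Suc k)
  have g': "(g has_derivative frechet_derivative f (at x)) (at x)" if "x \<in> U" for x
    using has_derivative_transform_within_open[OF Ck_on_Suc_has_derivative[OF Suc.prems(3) that]]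
      Suc.prems(1,2) that by simp
  then have "frechet_derivative g (at x) = frechet_derivative f (at x)" if "x \<in> U" for x
    using frechet_derivative_at that by metis
  then have "Ck_on k U (\<lambda>x. frechet_derivative g (at x) v)" for v
    using Suc.IH[of "\<lambda>x. frechet_derivative f (at x) v"] Suc.prems by auto
  with g' show ?case
    by (auto simp: differentiable_def)
qed

lemma Ck_on_SucI:
  assumes "open U"
    and "\<And>x. x \<in> U \<Longrightarrow> (f has_derivative f' x) (at x)"
    and "\<And>v. Ck_on k U (\<lambda>x. f' x v)"
  shows "Ck_on (Suc k) U f"
proof -
  have f': "frechet_derivative f (at x) = f' x" if "x \<in> U" for x
    using frechet_derivative_at assms(2) that by metis
  have "Ck_on k U (\<lambda>x. frechet_derivative f (at x) v)" for v
    by (rule Ck_on_cong[OF assms(1) _ assms(3)]) (simp add: f')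
  with assms(2) show ?thesis
    by (auto simp: differentiable_def)
qed

lemma Ck_on_const: "Ck_on k U (\<lambda>x. c)"
proof (induction k arbitrary: c)
  case (Suc k)
  have "frechet_derivative (\<lambda>x. c) (at x) = (\<lambda>h. 0)" for x
    by (metis frechet_derivative_at has_derivative_const)
  then show ?case using Suc by simp
qed simp

lemma Ck_on_bounded_linear: "bounded_linear L \<Longrightarrow> Ck_on k U L"
proof (cases k)
  case (Suc m)
  assume L: "bounded_linear L"
  then have "frechet_derivative L (at x) = L" for x
    by (metis frechet_derivative_at bounded_linear_imp_has_derivative)
  then show ?thesis using Suc L Ck_on_const by (auto simp: bounded_linear_imp_differentiable)
qed (simp add: linear_continuous_on)

lemma Ck_on_add:
  assumes "open U"
  shows "Ck_on k U f \<Longrightarrow> Ck_on k U g \<Longrightarrow> Ck_on k U (\<lambda>x. f x + g x)"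
proof (induction k arbitrary: f g)
  case (Suc k)
  show ?case
    by (rule Ck_on_SucI[OF assms has_derivative_add[OF Ck_on_Suc_has_derivative Ck_on_Suc_has_derivative]])
      (use Suc in auto)
qed (simp add: continuous_on_add)

lemma Ck_on_sum:
  fixes f :: "'i \<Rightarrow> 'a::real_normed_vector \<Rightarrow> 'b::real_normed_vector"
  assumes "open U" "finite S"
  shows "(\<And>i. i \<in> S \<Longrightarrow> Ck_on k U (f i)) \<Longrightarrow> Ck_on k U (\<lambda>x. \<Sum>i\<in>S. f i x)"
  using assms(2) by (induction S rule: finite_induct) (auto intro!: Ck_on_add[OF assms(1)] Ck_on_const)

lemma Ck_on_bilinear:
  assumes "open U" "bounded_bilinear pr"
  shows "Ck_on k U f \<Longrightarrow> Ck_on k U g \<Longrightarrow> Ck_on k U (\<lambda>x. pr (f x) (g x))"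
proof (induction k arbitrary: f g)
  case 0
  then show ?case using bounded_bilinear.continuous_on[OF assms(2)] by simp
next
  case (Suc k)
  have "Ck_on k U f" "Ck_on k U g"
    using Ck_on_Suc_imp_Ck_on Suc.prems by blast+
  with Suc show ?case
    by (intro Ck_on_SucI[OF assms(1) bounded_bilinear.FDERIV[OF assms(2)
          Ck_on_Suc_has_derivative Ck_on_Suc_has_derivative]] Ck_on_add[OF assms(1)] Suc.IH) auto
qed

lemma Ck_on_scaleR:
  "open U \<Longrightarrow> Ck_on k U f \<Longrightarrow> Ck_on k U g \<Longrightarrow> Ck_on k U (\<lambda>x. f x *\<^sub>R g x)"
  by (rule Ck_on_bilinear[OF _ bounded_bilinear_scaleR])

lemma Ck_on_inner:
  "open U \<Longrightarrow> Ck_on k U f \<Longrightarrow> Ck_on k U g \<Longrightarrow> Ck_on k U (\<lambda>x. f x \<bullet> g x)"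
  by (rule Ck_on_bilinear[OF _ bounded_bilinear_inner])

lemma Ck_on_cross:
  "open U \<Longrightarrow> Ck_on k U f \<Longrightarrow> Ck_on k U g \<Longrightarrow> Ck_on k U (\<lambda>x. f x \<times> g x)"
  using Ck_on_bilinear bilinear_cross bilinear_conv_bounded_bilinear by blast

lemma Ck_on_minus:
  assumes "open U" "Ck_on k U f"
  shows "Ck_on k U (\<lambda>x. - f x)"
proof -
  have "Ck_on k U (\<lambda>x. (-1) *\<^sub>R f x)"
    by (intro Ck_on_scaleR Ck_on_const assms)
  then show ?thesis by (rule Ck_on_cong[OF assms(1), rotated]) simp
qed

lemma Ck_on_diff:
  assumes "open U" "Ck_on k U f" "Ck_on k U g"
  shows "Ck_on k U (\<lambda>x. f x - g x)"
proof -
  have "Ck_on k U (\<lambda>x. f x + - g x)"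
    by (intro Ck_on_add Ck_on_minus assms)
  then show ?thesis by (rule Ck_on_cong[OF assms(1), rotated]) simp
qed

lemma Ck_on_inverse:
  fixes g :: "'a::real_normed_vector \<Rightarrow> real"
  assumes "open U"
  shows "Ck_on k U g \<Longrightarrow> (\<And>x. x \<in> U \<Longrightarrow> g x \<noteq> 0) \<Longrightarrow> Ck_on k U (\<lambda>x. inverse (g x))"
proof (induction k arbitrary: g)
  case (Suc k)
  have "Ck_on k U (\<lambda>x. inverse (g x))"
    using Suc Ck_on_Suc_imp_Ck_on by blast
  then have "Ck_on k U (\<lambda>x. - (inverse (g x) * frechet_derivative g (at x) v * inverse (g x)))" for v
    using Suc.prems(1)
    by (intro Ck_on_minus Ck_on_bilinear[OF assms bounded_bilinear_mult] Ck_on_const assms) auto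
  with Suc.prems show ?case
    by (intro Ck_on_SucI[OF assms Deriv.has_derivative_inverse[OF _ Ck_on_Suc_has_derivative]])
qed (simp add: continuous_on_inverse)

lemma Ck_on_linear_apply:
  fixes L :: "'a::real_normed_vector \<Rightarrow> 'c::euclidean_space \<Rightarrow> 'b::real_normed_vector"
  assumes "open U" "\<And>x. x \<in> U \<Longrightarrow> linear (L x)"
    and "\<And>b. b \<in> Basis \<Longrightarrow> Ck_on k U (\<lambda>x. L x b)" "Ck_on k U w"
  shows "Ck_on k U (\<lambda>x. L x (w x))"
proof -
  have "Ck_on k U (\<lambda>x. \<Sum>b\<in>Basis. (w x \<bullet> b) *\<^sub>R L x b)"
    by (intro Ck_on_sum Ck_on_scaleR Ck_on_inner Ck_on_const assms finite_Basis)
  moreover have "(\<Sum>b\<in>Basis. (w x \<bullet> b) *\<^sub>R L x b) = L x (w x)" if "x \<in> U" for x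
  proof -
    have "L x (w x) = L x (\<Sum>b\<in>Basis. (w x \<bullet> b) *\<^sub>R b)"
      by (simp add: euclidean_representation)
    then show ?thesis
      by (simp add: linear_sum[OF assms(2)[OF that]] linear_scale[OF assms(2)[OF that]])
  qed
  ultimately show ?thesis by (rule Ck_on_cong[OF assms(1), rotated])
qed

lemma Ck_on_compose:
  fixes f :: "'c::euclidean_space \<Rightarrow> 'b::real_normed_vector" and g :: "'a::real_normed_vector \<Rightarrow> 'c"
  assumes "open U"
  shows "Ck_on k V f \<Longrightarrow> Ck_on k U g \<Longrightarrow> g ` U \<subseteq> V \<Longrightarrow> Ck_on k U (\<lambda>x. f (g x))"
proof (induction k arbitrary: f g)
  case 0
  then show ?case using continuous_on_compose2[of V f U g] by simp
next
  case (Suc k)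
  have gx: "g x \<in> V" if "x \<in> U" for x using Suc.prems(3) that by auto
  have g: "Ck_on k U g" using Ck_on_Suc_imp_Ck_on Suc.prems(2) by blast
  have "Ck_on k U (\<lambda>x. frechet_derivative f (at (g x)) (frechet_derivative g (at x) v))" for v
  proof (rule Ck_on_linear_apply[OF assms])
    show "linear (frechet_derivative f (at (g x)))" if "x \<in> U" for x
      using has_derivative_linear[OF Ck_on_Suc_has_derivative[OF Suc.prems(1) gx[OF that]]] .
    show "Ck_on k U (\<lambda>x. frechet_derivative f (at (g x)) b)" for b
      using Suc.prems(1) by (intro Suc.IH[OF _ g Suc.prems(3)]) simp
    show "Ck_on k U (\<lambda>x. frechet_derivative g (at x) v)"
      using Suc.prems(2) by simp
  qed
  then show ?case
    using Suc.prems gx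
    by (intro Ck_on_SucI[OF assms has_derivative_compose[OF Ck_on_Suc_has_derivative
          Ck_on_Suc_has_derivative]])
qed

lemma Ck_on_norm: "Ck_on k (- {0}) (norm :: 'a::real_inner \<Rightarrow> real)"
proof (induction k)
  case 0
  then show ?case by (simp add: continuous_on_norm_id)
next
  case (Suc k)
  have o: "open (- {0::'a})" by auto
  have "(norm has_derivative (\<lambda>v. v \<bullet> (inverse (norm x) *\<^sub>R x))) (at x)" if "x \<noteq> 0" for x :: 'a
    using has_derivative_norm[OF that] by (simp add: sgn_div_norm divide_inverse_commute)
  moreover have "Ck_on k (- {0}) (\<lambda>x::'a. v \<bullet> (inverse (norm x) *\<^sub>R x))" for v
    by (intro Ck_on_inner Ck_on_scaleR Ck_on_inverse Ck_on_const Ck_on_bounded_linear Suc.IH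
        bounded_linear_ident o) auto
  ultimately show ?case
    by (intro Ck_on_SucI[OF o]) auto
qed

lemma Ck_on_normalize: "Ck_on k (- {0}) (\<lambda>x::'a::real_inner. (1 / norm x) *\<^sub>R x)"
proof -
  have "Ck_on k (- {0}) (\<lambda>x::'a. inverse (norm x) *\<^sub>R x)"
    by (intro Ck_on_scaleR Ck_on_inverse Ck_on_norm Ck_on_bounded_linear bounded_linear_ident) auto
  then show ?thesis by (rule Ck_on_cong[rotated 2]) (auto simp: divide_inverse)
qed

lemma linear_expand_3:
  "linear A \<Longrightarrow> A (t::real^3) = t$1 *\<^sub>R A (axis 1 1) + t$2 *\<^sub>R A (axis 2 1) + t$3 *\<^sub>R A (axis 3 1)"
proof -
  assume A: "linear A"
  have "t = t$1 *\<^sub>R axis 1 1 + t$2 *\<^sub>R axis 2 1 + t$3 *\<^sub>R axis 3 1"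
    by (simp add: vec_eq_iff forall_3 axis_def)
  then have "A t = A (t$1 *\<^sub>R axis 1 1 + t$2 *\<^sub>R axis 2 1 + t$3 *\<^sub>R axis 3 1)"
    by simp
  then show ?thesis by (simp add: linear_add[OF A] linear_scale[OF A])
qed

definition cofactor_map :: "(real^3 \<Rightarrow> real^3) \<Rightarrow> real^3 \<Rightarrow> real^3" where
  "cofactor_map A z =
     z$1 *\<^sub>R (A (axis 2 1) \<times> A (axis 3 1)) + z$2 *\<^sub>R (A (axis 3 1) \<times> A (axis 1 1)) +
     z$3 *\<^sub>R (A (axis 1 1) \<times> A (axis 2 1))"

lemma linear_cross_eq_cofactor_map: "linear A \<Longrightarrow> A u \<times> A w = cofactor_map A (u \<times> w)"
  unfolding linear_expand_3[of A u] linear_expand_3[of A w] cofactor_map_def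
  by (simp add: cross3_simps)

lemma cofactor_map_inner_image:
  "linear A \<Longrightarrow> cofactor_map A z \<bullet> A t = (z \<bullet> t) * (A (axis 1 1) \<bullet> (A (axis 2 1) \<times> A (axis 3 1)))"
  unfolding linear_expand_3[of A t] cofactor_map_def
  by (simp add: cross3_simps)

lemma det3_eq_cross_inner: "det3 a b c = (a \<times> b) \<bullet> c"
  by (simp add: det3_def cross3_simps)

lemma positive_definite_strict_Cauchy_Schwarz:
  fixes H :: "'a::real_vector \<Rightarrow> 'a \<Rightarrow> real"
  assumes "subspace T" "bilinear H"
    and sym: "\<forall>u\<in>T. \<forall>v\<in>T. H u v = H v u"
    and pos: "\<forall>u\<in>T. u \<noteq> 0 \<longrightarrow> H u u > 0"
    and T: "u \<in> T" "w \<in> T"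
    and indep: "w \<noteq> 0" "\<And>c. u \<noteq> c *\<^sub>R w"
  shows "(H u w)\<^sup>2 < H u u * H w w"
proof -
  have hw: "H w w > 0" using pos T indep by blast
  define c where "c = H u w / H w w"
  have "u - c *\<^sub>R w \<in> T" "u - c *\<^sub>R w \<noteq> 0"
    using T indep(2)[of c] by (auto intro: subspace_diff subspace_scale assms(1))
  then have "H (u - c *\<^sub>R w) (u - c *\<^sub>R w) > 0" using pos by blast
  also have "H (u - c *\<^sub>R w) (u - c *\<^sub>R w) = H u u - c * H u w"
    using sym T hw unfolding c_def
    by (simp add: bilinear_lsub[OF assms(2)] bilinear_rsub[OF assms(2)] bilinear_lmul[OF assms(2)]
        bilinear_rmul[OF assms(2)] field_simps)
  finally show ?thesis
    using hw unfolding c_def by (simp add: field_simps power2_eq_square)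
qed

section \<open>Smooth maps on the 2-sphere\<close>

lemma hext_S2: "p \<in> S2 \<Longrightarrow> hext F p = F p"
  by (simp add: hext_def S2_def)

lemma smooth_S2_if_Cinf_on:
  fixes F :: "real^3 \<Rightarrow> 'b::real_normed_vector"
  assumes "Cinf_on (- {0}) F"
  shows "smooth_S2 F"
  using assms unfolding smooth_S2_def Cinf_on_def hext_def
  by (auto intro!: Ck_on_compose[OF _ _ Ck_on_normalize])

lemma smooth_S2_has_derivative:
  assumes "smooth_S2 F" "p \<in> S2"
  shows "(hext F has_derivative dS2 F p) (at p)"
proof -
  have "Ck_on (Suc 0) (- {0}) (hext F)"
    using assms(1) unfolding smooth_S2_def Cinf_on_def by blast
  moreover have "p \<in> - {0}"
    using assms(2) by (auto simp: S2_def)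
  ultimately show ?thesis
    unfolding dS2_def[abs_def] by (rule Ck_on_Suc_has_derivative)
qed

lemma smooth_S2_derivative:
  assumes "smooth_S2 f"
  shows "\<And>y. y \<noteq> 0 \<Longrightarrow> linear (frechet_derivative (hext f) (at y))"
    and "Ck_on k (- {0}) (\<lambda>y. frechet_derivative (hext f) (at y) v)"
proof -
  have C: "Ck_on k (- {0}) (hext f)" for k
    using assms unfolding smooth_S2_def Cinf_on_def by blast
  show "linear (frechet_derivative (hext f) (at y))" if "y \<noteq> 0" for y
    using has_derivative_linear[OF Ck_on_Suc_has_derivative[OF C[of "Suc 0"]]] that by simp
  show "Ck_on k (- {0}) (\<lambda>y. frechet_derivative (hext f) (at y) v)"
    using C[of "Suc k"] by simp
qed

lemma smooth_S2_dS2_field: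
  assumes "smooth_S2 f" "Cinf_on (- {0}) V"
  shows "smooth_S2 (\<lambda>q. dS2 f q (V q))"
proof (rule smooth_S2_if_Cinf_on)
  show "Cinf_on (- {0}) (\<lambda>q. dS2 f q (V q))"
    unfolding Cinf_on_def dS2_def
  proof
    fix k
    show "Ck_on k (- {0}) (\<lambda>q. frechet_derivative (hext f) (at q) (V q))"
    proof (rule Ck_on_linear_apply)
      show "Ck_on k (- {0}) V" using assms(2) unfolding Cinf_on_def ..
    qed (use smooth_S2_derivative[OF assms(1)] in auto)
  qed
qed

lemma vfield_tangent_projection: "vfield (\<lambda>q. v - (v \<bullet> q) *\<^sub>R q)"
  and Cinf_on_tangent_projection: "Cinf_on (- {0}) (\<lambda>q. v - (v \<bullet> q) *\<^sub>R q)"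
proof -
  show C: "Cinf_on (- {0}) (\<lambda>q. v - (v \<bullet> q) *\<^sub>R q)"
    unfolding Cinf_on_def
    by (intro allI Ck_on_diff Ck_on_scaleR Ck_on_inner Ck_on_const Ck_on_bounded_linear
        bounded_linear_ident) auto
  have "v - (v \<bullet> q) *\<^sub>R q \<in> TS2 q" if "q \<in> S2" for q
    using that by (simp add: S2_def TS2_def inner_diff_left norm_eq_1)
  then show "vfield (\<lambda>q. v - (v \<bullet> q) *\<^sub>R q)"
    unfolding vfield_def using smooth_S2_if_Cinf_on[OF C] by blast
qed

lemma dS2_inner_orthogonal:
  assumes "smooth_S2 F" "smooth_S2 G" "\<And>q. q \<in> S2 \<Longrightarrow> F q \<bullet> G q = 0" "p \<in> S2"
  shows "F p \<bullet> dS2 G p v + dS2 F p v \<bullet> G p = 0"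
proof -
  have "((\<lambda>x. hext F x \<bullet> hext G x) has_derivative
      (\<lambda>t. hext F p \<bullet> dS2 G p t + dS2 F p t \<bullet> hext G p)) (at p)"
    using smooth_S2_has_derivative assms by (intro has_derivative_inner) auto
  moreover have "((\<lambda>x. hext F x \<bullet> hext G x) has_derivative (\<lambda>t. 0)) (at p)"
  proof (rule has_derivative_transform_within_open[OF has_derivative_const, of "- {0}"])
    show "p \<in> - {0}" using assms(4) by (auto simp: S2_def)
    show "0 = hext F x \<bullet> hext G x" if "x \<in> - {0}" for x
      using that assms(3)[of "(1 / norm x) *\<^sub>R x"] by (simp add: hext_def S2_def)
  qed auto
  ultimately have "(\<lambda>t. hext F p \<bullet> dS2 G p t + dS2 F p t \<bullet> hext G p) = (\<lambda>t. 0)"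
    by (rule has_derivative_unique)
  then show ?thesis
    using assms(4) by (simp add: hext_S2 fun_eq_iff)
qed

lemma subspace_TS2: "subspace (TS2 p)"
  using subspace_hyperplane[of p] by (simp add: TS2_def inner_commute)

lemma tangent_frame_S2:
  assumes "p \<in> S2"
  obtains u w where "u \<in> TS2 p" "w \<in> TS2 p" "u \<times> w = p"
proof -
  have "p \<noteq> 0" using assms by (auto simp: S2_def)
  then obtain a where a: "p \<times> a \<noteq> 0"
    using cross_basis_nonzero by blast
  define u where "u = (1 / norm (p \<times> a)) *\<^sub>R (p \<times> a)"
  have "u \<bullet> p = 0" "u \<bullet> u = 1"
    using a dot_cross_self(1)[of p a]
    by (auto simp: u_def inner_commute power2_norm_eq_inner[symmetric] power2_eq_square)
  moreover have "u \<times> (p \<times> u) = (u \<bullet> u) *\<^sub>R p - (u \<bullet> p) *\<^sub>R u"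
    by (simp add: cross3_simps forall_3)
  ultimately show ?thesis
    using that[of u "p \<times> u"] dot_cross_self(1)[of p u] by (simp add: TS2_def inner_commute)
qed

section \<open>The conormal of a Blaschke immersion\<close>

text \<open>There is no global tangent frame on the 2-sphere, so the conormal df u \<times> df w is written
  via the cofactor map of df, which depends smoothly on the point.\<close>

definition conormal :: "(real^3 \<Rightarrow> real^3) \<Rightarrow> real^3 \<Rightarrow> real^3" where
  "conormal f y = cofactor_map (frechet_derivative (hext f) (at y)) y"

lemma smooth_S2_conormal:
  assumes "smooth_S2 f"
  shows "smooth_S2 (conormal f)"
proof (rule smooth_S2_if_Cinf_on)
  have o: "open (- {0::real^3})" by auto
  note D = smooth_S2_derivative(2)[OF assms]
  have "Ck_on k (- {0}) (\<lambda>y. (y $ i) *\<^sub>R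
          (frechet_derivative (hext f) (at y) a \<times> frechet_derivative (hext f) (at y) b))" for k i a b
    by (intro Ck_on_scaleR Ck_on_cross D o Ck_on_bounded_linear bounded_linear_vec_nth)
  then show "Cinf_on (- {0}) (conormal f)"
    unfolding Cinf_on_def conormal_def cofactor_map_def by (intro allI Ck_on_add o)
qed

lemma conormal_orthogonal:
  assumes "smooth_S2 f" "p \<in> S2" "v \<in> TS2 p"
  shows "conormal f p \<bullet> dS2 f p v = 0"
proof -
  have "p \<noteq> 0" using assms(2) by (auto simp: S2_def)
  then show ?thesis
    using assms(3) cofactor_map_inner_image[OF smooth_S2_derivative(1)[OF assms(1)]]
    by (simp add: conormal_def dS2_def TS2_def inner_commute)
qed

lemma det3_eq_conormal_inner:
  assumes "smooth_S2 f" "p \<in> S2" "u \<times> w = p"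
  shows "det3 (dS2 f p u) (dS2 f p w) x = conormal f p \<bullet> x"
proof -
  have "p \<noteq> 0" using assms(2) by (auto simp: S2_def)
  then show ?thesis
    using assms(3) linear_cross_eq_cofactor_map[OF smooth_S2_derivative(1)[OF assms(1)]]
    by (simp add: det3_eq_cross_inner conormal_def dS2_def)
qed

lemma conormal_inner_blaschke_normal_nonzero:
  assumes "smooth_S2 f" "blaschke_normal f xi" "p \<in> S2"
  shows "conormal f p \<bullet> xi p \<noteq> 0"
proof -
  obtain h k where h: "pos_def_sym_tensor h" and "k > 0"
    and vol: "\<forall>p\<in>S2. \<forall>u\<in>TS2 p. \<forall>v\<in>TS2 p.
      (det3 (dS2 f p u) (dS2 f p v) (xi p))\<^sup>2 = k * (h p u u * h p v v - (h p u v)\<^sup>2)"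
    using assms(2) unfolding blaschke_normal_def by blast
  obtain u w where uw: "u \<in> TS2 p" "w \<in> TS2 p" "u \<times> w = p"
    using tangent_frame_S2[OF assms(3)] .
  have "w \<noteq> 0" "u \<noteq> c *\<^sub>R w" for c
    using uw(3) assms(3) by (auto simp: S2_def cross_mult_left)
  then have "(h p u w)\<^sup>2 < h p u u * h p w w"
    using h assms(3) uw
    by (intro positive_definite_strict_Cauchy_Schwarz[OF subspace_TS2]) (auto simp: pos_def_sym_tensor_def)
  then have "(det3 (dS2 f p u) (dS2 f p w) (xi p))\<^sup>2 > 0"
    using vol assms(3) uw \<open>k > 0\<close> by simp
  then show ?thesis
    using det3_eq_conormal_inner[OF assms(1,3) uw(3)] by auto
qed

lemma blaschke_normal_derivative_tangent:
  assumes "blaschke_normal f xi" "p \<in> S2" "v \<in> TS2 p"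
  obtains a where "a \<in> TS2 p" "dS2 xi p v = - dS2 f p a"
proof -
  obtain alpha where "bundle_endo alpha"
    and weingarten: "\<And>X. vfield X \<Longrightarrow> \<forall>p\<in>S2. dS2 xi p (X p) = - dS2 f p (alpha p (X p))"
    using assms(1) unfolding blaschke_normal_def by blast
  then have "alpha p v \<in> TS2 p"
    using assms(2,3) unfolding bundle_endo_def by blast
  moreover have "dS2 xi p v = - dS2 f p (alpha p v)"
    using weingarten[OF vfield_tangent_projection[of v]] assms(2,3) by (force simp: TS2_def)
  ultimately show thesis by (rule that)
qed

lemma conormal_derivative_injective:
  assumes "smooth_S2 f" "blaschke_normal f xi" "p \<in> S2" "v \<in> TS2 p"
    and "dS2 (conormal f) p v = c *\<^sub>R conormal f p"
  shows "v = 0"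
proof -
  obtain nabla h where nabla: "torsion_free_connection nabla" and h: "pos_def_sym_tensor h"
    and gauss: "\<And>X Y. vfield X \<Longrightarrow> vfield Y \<Longrightarrow> \<forall>p\<in>S2.
      dS2 (\<lambda>q. dS2 f q (Y q)) p (X p) = dS2 f p (nabla X Y p) + h p (X p) (Y p) *\<^sub>R xi p"
    using assms(2) unfolding blaschke_normal_def by blast
  define V where "V q = v - (v \<bullet> q) *\<^sub>R q" for q
  have V: "vfield V" "V p = v"
    using vfield_tangent_projection assms(4) unfolding V_def[abs_def] by (auto simp: TS2_def)
  define G where "G q = dS2 f q (V q)" for q
  have "conormal f p \<bullet> dS2 G p v + dS2 (conormal f) p v \<bullet> G p = 0"
  proof (rule dS2_inner_orthogonal[OF smooth_S2_conormal[OF assms(1)]])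
    show "smooth_S2 G"
      unfolding G_def V_def by (rule smooth_S2_dS2_field[OF assms(1) Cinf_on_tangent_projection])
    show "conormal f q \<bullet> G q = 0" if "q \<in> S2" for q
      using conormal_orthogonal[OF assms(1) that] V(1) that by (simp add: G_def vfield_def)
  qed (rule assms(3))
  moreover have "dS2 G p v = dS2 f p (nabla V V p) + h p v v *\<^sub>R xi p"
    using gauss[OF V(1) V(1)] assms(3) V(2) unfolding G_def by force
  moreover have "nabla V V p \<in> TS2 p"
    using nabla V(1) assms(3) unfolding torsion_free_connection_def vfield_def by blast
  ultimately have "h p v v * (conormal f p \<bullet> xi p) = 0"
    using assms(5) conormal_orthogonal[OF assms(1,3)] assms(4) V(2)
    by (simp add: G_def inner_add_right)
  then have "h p v v = 0"
    using conormal_inner_blaschke_normal_nonzero[OF assms(1-3)] by simp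
  moreover have "\<forall>u\<in>TS2 p. u \<noteq> 0 \<longrightarrow> h p u u > 0"
    using h assms(3) unfolding pos_def_sym_tensor_def by blast
  ultimately show "v = 0"
    using assms(4) by force
qed

theorem lemma3p1:
  fixes f xi :: "real^3 \<Rightarrow> real^3"
  assumes "strictly_convex_embedding f"
    and "blaschke_normal f xi"
  shows "wave_front xi"
  unfolding wave_front_def
proof (intro exI conjI ballI impI)
  have f: "smooth_S2 f"
    using assms(1) by (simp add: strictly_convex_embedding_def)
  show "smooth_S2 (conormal f)"
    using smooth_S2_conormal[OF f] .
  show "conormal f p \<noteq> 0" if "p \<in> S2" for p
    using conormal_inner_blaschke_normal_nonzero[OF f assms(2) that] by auto
  show "conormal f p \<bullet> dS2 xi p v = 0" if "p \<in> S2" "v \<in> TS2 p" for p v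
    using blaschke_normal_derivative_tangent[OF assms(2) that] conormal_orthogonal[OF f that(1)]
    by (metis inner_minus_right neg_equal_0_iff_equal)
  show "v = 0" if "p \<in> S2" "v \<in> TS2 p"
    and "dS2 xi p v = 0 \<and> (\<exists>c. dS2 (conormal f) p v = c *\<^sub>R conormal f p)" for p v
    using conormal_derivative_injective[OF f assms(2) that(1,2)] that(3) by blast
qed

end
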